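(* Let $G=(V,E)$ be an undirected graph on $n$ vertices, let $\alpha\in(0,1)$, and let the jump distribution be uniform, $q_w=1/n$ for all $w\in V$. Suppose $u,v\in V$ are distinct non-adjacent vertices, $v$ has at least one neighbour, and there is a graph automorphism $\sigma$ of $G$ with $\sigma(v)=u$ and $\sigma(u)=v$. Let $G'=(V,E\cup\{uv\})$. Then $$\pi^{G'}_v>\pi^{G}_v\quad\text{and}\quad\pi^{G'}_u>\pi^{G}_u.$$
   Context: For an undirected graph $H$ on $V$, the PageRank of a vertex $w$ with at least one neighbour is $\pi^H_w=\alpha\,\frac{\sum_{x\in V}q_x\phi_{xw}}{1-\frac{1-\alpha}{|\Gamma(w)|}\sum_{i\in\Gamma(w)}\phi_{iw}}$, where $\Gamma(w)$ is the neighbour set in $H$ and $\phi_{xw}$ is the probability that an $\alpha$-random walk on $H$ (at each step with probability $\alpha$ it jumps to a vertex drawn from $\bm q$, otherwise moves to a uniformly random neighbour; a vertex with no neighbours forces a jump) started at $x$ visits $w$ before its first jump. When $H$ has no isolated vertices this is the stationary probability of $w$ under the $\alpha$-random walk. A graph automorphism is a permutation $\sigma$ of $V$ with $\sigma(a)\sigma(b)\in E$ iff $ab\in E$. *)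

theory Defs
  imports Complex_Main
begin

definition simple_graph :: "'a set \<Rightarrow> 'a set set \<Rightarrow> bool" where
  "simple_graph V E \<longleftrightarrow> finite V \<and> (\<forall>e\<in>E. \<exists>a b. a \<in> V \<and> b \<in> V \<and> a \<noteq> b \<and> e = {a, b})"

definition nbrs :: "'a set \<Rightarrow> 'a set set \<Rightarrow> 'a \<Rightarrow> 'a set" where
  "nbrs V E w = {x \<in> V. {w, x} \<in> E}"

definition graph_automorphism :: "'a set \<Rightarrow> 'a set set \<Rightarrow> ('a \<Rightarrow> 'a) \<Rightarrow> bool" where
  "graph_automorphism V E \<sigma> \<longleftrightarrow> bij_betw \<sigma> V V \<and>
     (\<forall>a\<in>V. \<forall>b\<in>V. {\<sigma> a, \<sigma> b} \<in> E \<longleftrightarrow> {a, b} \<in> E)"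

definition first_hit_walks :: "'a set \<Rightarrow> 'a set set \<Rightarrow> 'a \<Rightarrow> 'a \<Rightarrow> nat \<Rightarrow> 'a list set" where
  "first_hit_walks V E x w k = {p. length p = Suc k \<and> set p \<subseteq> V \<and> hd p = x \<and> last p = w
      \<and> w \<notin> set (butlast p) \<and> (\<forall>i<k. {p ! i, p ! Suc i} \<in> E)}"

text \<open>Probability that the alpha-random walk follows path p for its |p|-1 steps
  without jumping: each step moves to a uniformly random neighbour with prob. 1-alpha.\<close>
definition walk_weight :: "real \<Rightarrow> 'a set \<Rightarrow> 'a set set \<Rightarrow> 'a list \<Rightarrow> real" where
  "walk_weight \<alpha> V E p = (\<Prod>i<length p - 1. (1 - \<alpha>) / real (card (nbrs V E (p ! i))))"

text \<open>phi x w: probability that the alpha-random walk started at x visits w before its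
  first jump (sum over the disjoint events "first visit to w at step k, no jump before").\<close>
definition phi :: "real \<Rightarrow> 'a set \<Rightarrow> 'a set set \<Rightarrow> 'a \<Rightarrow> 'a \<Rightarrow> real" where
  "phi \<alpha> V E x w = (\<Sum>k. \<Sum>p\<in>first_hit_walks V E x w k. walk_weight \<alpha> V E p)"

definition pagerank :: "real \<Rightarrow> ('a \<Rightarrow> real) \<Rightarrow> 'a set \<Rightarrow> 'a set set \<Rightarrow> 'a \<Rightarrow> real" where
  "pagerank \<alpha> q V E w =
     \<alpha> * (\<Sum>x\<in>V. q x * phi \<alpha> V E x w) /
     (1 - (1 - \<alpha>) / real (card (nbrs V E w)) * (\<Sum>i\<in>nbrs V E w. phi \<alpha> V E i w))"

end

theory Submission
  imports Defs
begin

text \<open>Let \<open>P\<close> be the transition operator of the random walk, damped by \<open>1 - \<alpha>\<close>, and let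
  \<open>G\<^sub>w = e\<^sub>w + P G\<^sub>w\<close>, so that \<open>G\<^sub>w x\<close> is the expected number of visits to \<open>w\<close> before the first
  jump of the walk started at \<open>x\<close>. Renewal at \<open>w\<close> turns the defining formula of PageRank into
  \<open>\<pi>\<^sub>w = \<alpha>/n \<Sum>\<^sub>x G\<^sub>w x\<close>.

  Adding the edge \<open>uv\<close> changes \<open>P\<close> only in the rows \<open>u\<close> and \<open>v\<close>, hence
  \<open>G\<^sub>v = G'\<^sub>v - r\<^sub>u G'\<^sub>u - r\<^sub>v G'\<^sub>v\<close> for the Green functions \<open>G'\<close> of the new graph and explicit
  coefficients \<open>r\<^sub>u, r\<^sub>v\<close>. The automorphism swapping \<open>u\<close> and \<open>v\<close> is also one of the new graph, so
  \<open>G'\<^sub>u\<close> and \<open>G'\<^sub>v\<close> have the same total mass, and the mass of \<open>G\<^sub>v\<close> grows by \<open>r\<^sub>u + r\<^sub>v\<close> times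
  it. Finally \<open>r\<^sub>u + r\<^sub>v\<close> has the sign of \<open>1 - \<alpha> (G\<^sub>u v + G\<^sub>v v)\<close>, which is positive because
  \<open>\<Sum>\<^sub>w G\<^sub>w v \<le> 1/\<alpha>\<close> and a neighbour \<open>y\<close> of \<open>v\<close> contributes \<open>G\<^sub>y v > 0\<close>. Exchanging
  \<open>u\<close> and \<open>v\<close> gives the claim for \<open>u\<close>.\<close>

text \<open>At an isolated vertex the division by zero makes \<open>walk_op\<close> vanish, matching the forced jump.\<close>
definition walk_op :: "real \<Rightarrow> 'a set \<Rightarrow> 'a set set \<Rightarrow> ('a \<Rightarrow> real) \<Rightarrow> 'a \<Rightarrow> real" where
  "walk_op \<alpha> V E f x = (1 - \<alpha>) / real (card (nbrs V E x)) * (\<Sum>y\<in>nbrs V E x. f y)"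

definition green_equation :: "real \<Rightarrow> 'a set \<Rightarrow> 'a set set \<Rightarrow> 'a \<Rightarrow> ('a \<Rightarrow> real) \<Rightarrow> bool" where
  "green_equation \<alpha> V E w g \<longleftrightarrow> (\<forall>x\<in>V. g x = (if x = w then 1 else 0) + walk_op \<alpha> V E g x)"

definition green :: "real \<Rightarrow> 'a set \<Rightarrow> 'a set set \<Rightarrow> 'a \<Rightarrow> 'a \<Rightarrow> real" where
  "green \<alpha> V E w = (SOME g. green_equation \<alpha> V E w g)"

lemma nbrs_subset: "nbrs V E x \<subseteq> V"
  by (auto simp: nbrs_def)

lemma finite_nbrs: "finite V \<Longrightarrow> finite (nbrs V E x)"
  using nbrs_subset finite_subset by metis

lemma nbrs_memD: "y \<in> nbrs V E x \<Longrightarrow> y \<in> V"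
  by (simp add: nbrs_def)

lemma walk_op_diff: "walk_op \<alpha> V E (\<lambda>y. f y - g y) x = walk_op \<alpha> V E f x - walk_op \<alpha> V E g x"
  by (simp add: walk_op_def sum_subtractf algebra_simps)

lemma walk_op_cmult: "walk_op \<alpha> V E (\<lambda>y. c * f y) x = c * walk_op \<alpha> V E f x"
  by (simp add: walk_op_def sum_distrib_left[symmetric] algebra_simps)

lemma walk_op_uminus: "walk_op \<alpha> V E (\<lambda>y. - f y) x = - walk_op \<alpha> V E f x"
  by (simp add: walk_op_def sum_negf)

lemma walk_op_sum:
  "finite I \<Longrightarrow> walk_op \<alpha> V E (\<lambda>y. \<Sum>i\<in>I. f i y) x = (\<Sum>i\<in>I. walk_op \<alpha> V E (f i) x)"
  by (simp add: walk_op_def sum_distrib_left sum.swap[of _ I])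

lemma walk_op_nonneg:
  "\<alpha> \<le> 1 \<Longrightarrow> (\<And>y. y \<in> nbrs V E x \<Longrightarrow> 0 \<le> f y) \<Longrightarrow> 0 \<le> walk_op \<alpha> V E f x"
  unfolding walk_op_def by (intro mult_nonneg_nonneg sum_nonneg) auto

lemma walk_op_le:
  assumes "\<alpha> \<le> 1" "0 \<le> M" "\<And>y. y \<in> nbrs V E x \<Longrightarrow> f y \<le> M"
  shows "walk_op \<alpha> V E f x \<le> (1 - \<alpha>) * M"
proof (cases "card (nbrs V E x) = 0")
  case True
  then show ?thesis using assms by (simp add: walk_op_def)
next
  case False
  have "(\<Sum>y\<in>nbrs V E x. f y) \<le> real (card (nbrs V E x)) * M"
    using sum_bounded_above[of "nbrs V E x" f M] assms by auto
  then have "walk_op \<alpha> V E f x \<le> (1 - \<alpha>) / real (card (nbrs V E x)) * (real (card (nbrs V E x)) * M)"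
    unfolding walk_op_def using assms by (intro mult_left_mono) auto
  then show ?thesis using False by simp
qed

lemma walk_op_ge_nbr:
  assumes "finite V" "\<alpha> \<le> 1" "y \<in> nbrs V E x" "\<And>z. z \<in> nbrs V E x \<Longrightarrow> 0 \<le> f z"
  shows "(1 - \<alpha>) / real (card (nbrs V E x)) * f y \<le> walk_op \<alpha> V E f x"
  unfolding walk_op_def using assms finite_nbrs
  by (intro mult_left_mono member_le_sum) auto

lemma nbrs_insert_edge:
  assumes "v \<in> V"
  shows "nbrs V (insert {u, v} E) u = insert v (nbrs V E u)"
    and "x \<noteq> u \<Longrightarrow> x \<noteq> v \<Longrightarrow> nbrs V (insert {u, v} E) x = nbrs V E x"
  using assms by (auto simp: nbrs_def doubleton_eq_iff)

definition edge_increment :: "real \<Rightarrow> 'a set \<Rightarrow> 'a set set \<Rightarrow> ('a \<Rightarrow> real) \<Rightarrow> 'a \<Rightarrow> 'a \<Rightarrow> real" where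
  "edge_increment \<alpha> V E f a b =
     ((1 - \<alpha>) * f b - walk_op \<alpha> V E f a) / (real (card (nbrs V E a)) + 1)"

lemma walk_op_insert_edge_endpoint:
  assumes "finite V" "v \<in> V" "v \<notin> nbrs V E u"
  shows "walk_op \<alpha> V (insert {u, v} E) f u = walk_op \<alpha> V E f u + edge_increment \<alpha> V E f u v"
proof -
  define d where "d = real (card (nbrs V E u))"
  define S where "S = (\<Sum>y\<in>nbrs V E u. f y)"
  have lhs: "walk_op \<alpha> V (insert {u, v} E) f u = (1 - \<alpha>) / (d + 1) * (f v + S)"
    using assms finite_nbrs[OF assms(1)]
    by (simp add: walk_op_def nbrs_insert_edge d_def S_def)
  have rhs: "walk_op \<alpha> V E f u + edge_increment \<alpha> V E f u v
      = (1 - \<alpha>) / d * S + ((1 - \<alpha>) * f v - (1 - \<alpha>) / d * S) / (d + 1)"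
    by (simp add: edge_increment_def walk_op_def d_def S_def)
  show ?thesis
  proof (cases "d = 0")
    case True
    then have "S = 0" using finite_nbrs[OF assms(1)] by (simp add: d_def S_def)
    then show ?thesis using True lhs rhs by simp
  next
    case False
    then have d: "d > 0" by (simp add: d_def)
    define b where "b = 1 - \<alpha>"
    have "b / d * S + (b * f v - b / d * S) / (d + 1)
        = (b / d * S * (d + 1) + (b * f v - b / d * S)) / (d + 1)"
      using d by (simp add: add_divide_distrib)
    also have "b / d * S * (d + 1) + (b * f v - b / d * S) = b * (f v + S)"
      using d by (simp add: algebra_simps add_divide_distrib)
    finally show ?thesis unfolding lhs rhs b_def by simp
  qed
qed

lemma walk_op_insert_edge:
  assumes "finite V" "u \<in> V" "v \<in> V" "u \<noteq> v" "{u, v} \<notin> E"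
  shows "walk_op \<alpha> V (insert {u, v} E) f x = walk_op \<alpha> V E f x
    + (if x = u then edge_increment \<alpha> V E f u v else 0)
    + (if x = v then edge_increment \<alpha> V E f v u else 0)"
proof -
  have "v \<notin> nbrs V E u" "u \<notin> nbrs V E v"
    using assms(5) by (auto simp: nbrs_def insert_commute)
  consider "x = u" | "x = v" | "x \<noteq> u" "x \<noteq> v" by blast
  then show ?thesis
  proof cases
    case 1
    then show ?thesis using walk_op_insert_edge_endpoint[OF assms(1,3) \<open>v \<notin> nbrs V E u\<close>] assms(4)
      by simp
  next
    case 2
    then show ?thesis using walk_op_insert_edge_endpoint[OF assms(1,2) \<open>u \<notin> nbrs V E v\<close>] assms(4)
      by (simp add: insert_commute)
  next
    case 3
    then show ?thesis using nbrs_insert_edge(2)[OF assms(3)] by (simp add: walk_op_def)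
  qed
qed

lemma simple_graph_no_loop:
  "simple_graph V E \<Longrightarrow> x \<notin> nbrs V E x"
  by (auto simp: simple_graph_def nbrs_def doubleton_eq_iff)

lemma nbrs_automorphism:
  assumes "graph_automorphism V E \<sigma>" "x \<in> V"
  shows "nbrs V E (\<sigma> x) = \<sigma> ` nbrs V E x"
proof -
  have im: "\<sigma> ` V = V" and edges: "\<And>a b. a \<in> V \<Longrightarrow> b \<in> V \<Longrightarrow> {\<sigma> a, \<sigma> b} \<in> E \<longleftrightarrow> {a, b} \<in> E"
    using assms(1) by (auto simp: graph_automorphism_def bij_betw_def)
  have "nbrs V E (\<sigma> x) = {y \<in> \<sigma> ` V. {\<sigma> x, y} \<in> E}"
    by (simp add: nbrs_def im)
  also have "\<dots> = \<sigma> ` {z \<in> V. {\<sigma> x, \<sigma> z} \<in> E}"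
    by blast
  also have "\<dots> = \<sigma> ` nbrs V E x"
    unfolding nbrs_def using edges assms(2) by (metis (no_types, lifting) Collect_cong)
  finally show ?thesis .
qed

lemma card_nbrs_automorphism:
  assumes "graph_automorphism V E \<sigma>" "x \<in> V"
  shows "card (nbrs V E (\<sigma> x)) = card (nbrs V E x)"
proof -
  have "inj_on \<sigma> (nbrs V E x)"
    using assms(1) nbrs_subset inj_on_subset by (metis bij_betw_def graph_automorphism_def)
  then show ?thesis by (simp add: nbrs_automorphism[OF assms] card_image)
qed

lemma walk_op_automorphism:
  assumes "graph_automorphism V E \<sigma>" "x \<in> V"
  shows "walk_op \<alpha> V E g (\<sigma> x) = walk_op \<alpha> V E (\<lambda>y. g (\<sigma> y)) x"
proof -
  have "inj_on \<sigma> (nbrs V E x)"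
    using assms(1) nbrs_subset inj_on_subset by (metis bij_betw_def graph_automorphism_def)
  then show ?thesis
    unfolding walk_op_def nbrs_automorphism[OF assms] by (simp add: sum.reindex card_image)
qed

lemma green_equation_automorphism:
  assumes "graph_automorphism V E \<sigma>" "w \<in> V" "green_equation \<alpha> V E (\<sigma> w) g"
  shows "green_equation \<alpha> V E w (\<lambda>x. g (\<sigma> x))"
  unfolding green_equation_def
proof
  fix x assume x: "x \<in> V"
  have "bij_betw \<sigma> V V" using assms(1) by (simp add: graph_automorphism_def)
  then have "\<sigma> x \<in> V" "\<sigma> x = \<sigma> w \<longleftrightarrow> x = w"
    using x assms(2) by (auto simp: bij_betw_def inj_on_eq_iff)
  then show "g (\<sigma> x) = (if x = w then 1 else 0) + walk_op \<alpha> V E (\<lambda>x. g (\<sigma> x)) x"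
    using assms(3) walk_op_automorphism[OF assms(1) x] by (simp add: green_equation_def)
qed

lemma graph_automorphism_insert_edge:
  assumes "graph_automorphism V E \<sigma>" "u \<in> V" "v \<in> V" "\<sigma> u = v" "\<sigma> v = u"
  shows "graph_automorphism V (insert {u, v} E) \<sigma>"
proof -
  have "inj_on \<sigma> V" using assms(1) by (simp add: graph_automorphism_def bij_betw_def)
  then have "{\<sigma> a, \<sigma> b} = {u, v} \<longleftrightarrow> {a, b} = {u, v}" if "a \<in> V" "b \<in> V" for a b
    using that assms(2-5) by (auto simp: doubleton_eq_iff inj_on_eq_iff)
  then show ?thesis using assms(1) by (auto simp: graph_automorphism_def)
qed

lemma first_hit_walks_0:
  "w \<in> V \<Longrightarrow> first_hit_walks V E x w 0 = (if x = w then {[w]} else {})"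
  by (auto simp: first_hit_walks_def length_Suc_conv)

lemma first_hit_walks_Suc_self: "first_hit_walks V E w w (Suc k) = {}"
  by (auto simp: first_hit_walks_def length_Suc_conv)

lemma first_hit_walks_Suc:
  assumes "x \<noteq> w" "x \<in> V"
  shows "first_hit_walks V E x w (Suc k) = (\<lambda>p. x # p) ` (\<Union>y\<in>nbrs V E x. first_hit_walks V E y w k)"
proof (rule set_eqI, rule iffI)
  fix p assume p: "p \<in> first_hit_walks V E x w (Suc k)"
  then have len: "length p = Suc (Suc k)" and sp: "set p \<subseteq> V" and hp: "hd p = x"
    and lp: "last p = w" and bp: "w \<notin> set (butlast p)"
    and ep: "\<forall>i<Suc k. {p ! i, p ! Suc i} \<in> E"
    by (auto simp: first_hit_walks_def)
  obtain y q where pq: "p = x # y # q" using len hp by (auto simp: length_Suc_conv)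
  have "y \<in> nbrs V E x" using ep[rule_format, of 0] sp pq by (simp add: nbrs_def)
  moreover have "y # q \<in> first_hit_walks V E y w k"
    unfolding first_hit_walks_def
  proof (intro CollectI conjI allI impI)
    fix i assume "i < k"
    then show "{(y # q) ! i, (y # q) ! Suc i} \<in> E" using ep[rule_format, of "Suc i"] pq by simp
  qed (use len sp lp bp pq in auto)
  ultimately show "p \<in> (\<lambda>p. x # p) ` (\<Union>y\<in>nbrs V E x. first_hit_walks V E y w k)"
    using pq by blast
next
  fix p assume "p \<in> (\<lambda>p. x # p) ` (\<Union>y\<in>nbrs V E x. first_hit_walks V E y w k)"
  then obtain y q where y: "y \<in> nbrs V E x" and q: "q \<in> first_hit_walks V E y w k"
    and pq: "p = x # q" by blast
  from q have len: "length q = Suc k" and sq: "set q \<subseteq> V" and hq: "hd q = y"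
    and lq: "last q = w" and bq: "w \<notin> set (butlast q)"
    and eq: "\<forall>i<k. {q ! i, q ! Suc i} \<in> E"
    by (auto simp: first_hit_walks_def)
  obtain q' where q': "q = y # q'" using len hq by (auto simp: length_Suc_conv)
  have e0: "{x, y} \<in> E" using y by (simp add: nbrs_def)
  show "p \<in> first_hit_walks V E x w (Suc k)"
    unfolding first_hit_walks_def
  proof (intro CollectI conjI allI impI)
    fix i assume i: "i < Suc k"
    show "{p ! i, p ! Suc i} \<in> E"
      using e0 eq i pq q' by (cases i) auto
  qed (use len sq lq bq pq q' assms in auto)
qed

lemma finite_first_hit_walks: "finite V \<Longrightarrow> finite (first_hit_walks V E x w k)"
  by (rule finite_subset[OF _ finite_lists_length_eq[of V "Suc k"]])
    (auto simp: first_hit_walks_def)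

lemma walk_weight_Cons:
  "q \<noteq> [] \<Longrightarrow> walk_weight \<alpha> V E (x # q) = (1 - \<alpha>) / real (card (nbrs V E x)) * walk_weight \<alpha> V E q"
  by (cases q) (simp_all add: walk_weight_def prod.lessThan_Suc_shift del: prod.lessThan_Suc)

definition first_hit_weight :: "real \<Rightarrow> 'a set \<Rightarrow> 'a set set \<Rightarrow> 'a \<Rightarrow> 'a \<Rightarrow> nat \<Rightarrow> real" where
  "first_hit_weight \<alpha> V E x w k = (\<Sum>p\<in>first_hit_walks V E x w k. walk_weight \<alpha> V E p)"

lemma phi_eq_suminf: "phi \<alpha> V E x w = (\<Sum>k. first_hit_weight \<alpha> V E x w k)"
  by (simp add: phi_def first_hit_weight_def)

lemma first_hit_weight_0:
  "w \<in> V \<Longrightarrow> first_hit_weight \<alpha> V E x w 0 = (if x = w then 1 else 0)"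
  by (simp add: first_hit_weight_def first_hit_walks_0 walk_weight_def)

lemma first_hit_weight_Suc:
  assumes "finite V" "x \<in> V"
  shows "first_hit_weight \<alpha> V E x w (Suc k)
    = (if x = w then 0 else walk_op \<alpha> V E (\<lambda>y. first_hit_weight \<alpha> V E y w k) x)"
proof (cases "x = w")
  case True
  then show ?thesis by (simp add: first_hit_weight_def first_hit_walks_Suc_self)
next
  case False
  let ?c = "(1 - \<alpha>) / real (card (nbrs V E x))"
  have disjoint: "first_hit_walks V E y w k \<inter> first_hit_walks V E y' w k = {}" if "y \<noteq> y'" for y y'
    using that by (auto simp: first_hit_walks_def)
  have "first_hit_weight \<alpha> V E x w (Suc k)
      = (\<Sum>p\<in>(\<Union>y\<in>nbrs V E x. first_hit_walks V E y w k). walk_weight \<alpha> V E (x # p))"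
    unfolding first_hit_weight_def first_hit_walks_Suc[OF False assms(2)]
    by (simp add: sum.reindex inj_on_def)
  also have "\<dots> = (\<Sum>y\<in>nbrs V E x. \<Sum>p\<in>first_hit_walks V E y w k. walk_weight \<alpha> V E (x # p))"
    using disjoint by (intro sum.UNION_disjoint) (auto simp: finite_nbrs finite_first_hit_walks assms(1))
  also have "\<dots> = (\<Sum>y\<in>nbrs V E x. \<Sum>p\<in>first_hit_walks V E y w k. ?c * walk_weight \<alpha> V E p)"
    by (intro sum.cong refl walk_weight_Cons) (auto simp: first_hit_walks_def)
  also have "\<dots> = walk_op \<alpha> V E (\<lambda>y. first_hit_weight \<alpha> V E y w k) x"
    by (simp add: walk_op_def first_hit_weight_def sum_distrib_left)
  finally show ?thesis using False by simp
qed

locale damped_walk =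
  fixes V :: "'a set" and \<alpha> :: real
  assumes finite_V: "finite V" and alpha_pos: "0 < \<alpha>" and alpha_less_1: "\<alpha> < 1"
begin

lemma exists_max_on:
  fixes f :: "'a \<Rightarrow> real"
  assumes "V \<noteq> {}"
  obtains x0 where "x0 \<in> V" "\<And>x. x \<in> V \<Longrightarrow> f x \<le> f x0"
proof -
  have "Max (f ` V) \<in> f ` V" using finite_V assms by simp
  then obtain x0 where "x0 \<in> V" "f x0 = Max (f ` V)" by auto
  then show thesis using that finite_V by simp
qed

lemma walk_op_le_max:
  fixes f :: "'a \<Rightarrow> real"
  assumes "x0 \<in> V" "\<And>x. x \<in> V \<Longrightarrow> f x \<le> f x0" "0 \<le> f x0"
  shows "walk_op \<alpha> V E f x0 \<le> (1 - \<alpha>) * f x0"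
  using assms nbrs_subset[of V E x0] alpha_less_1 by (intro walk_op_le) auto

lemma max_principle:
  assumes "0 \<le> K" and sub: "\<And>x. x \<in> V \<Longrightarrow> f x \<le> K \<or> f x \<le> walk_op \<alpha> V E f x"
  shows "\<forall>x\<in>V. f x \<le> K"
proof (rule ccontr)
  assume "\<not> (\<forall>x\<in>V. f x \<le> K)"
  then obtain x0 where x0: "x0 \<in> V" "\<And>x. x \<in> V \<Longrightarrow> f x \<le> f x0" and gt: "K < f x0"
    using exists_max_on[of f] by (metis empty_iff order.strict_trans2 not_le)
  then have "f x0 \<le> walk_op \<alpha> V E f x0" using sub by fastforce
  also have "\<dots> \<le> (1 - \<alpha>) * f x0"
    using x0 gt assms(1) by (intro walk_op_le_max) auto
  finally show False using mult_pos_pos[OF alpha_pos, of "f x0"] gt assms(1) by (simp add: algebra_simps)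
qed

lemma max_principle_source:
  assumes "0 \<le> K" and sub: "\<And>x. x \<in> V \<Longrightarrow> f x \<le> K + walk_op \<alpha> V E f x"
  shows "\<forall>x\<in>V. f x \<le> K / \<alpha>"
proof (rule ccontr)
  assume "\<not> (\<forall>x\<in>V. f x \<le> K / \<alpha>)"
  then obtain x0 where x0: "x0 \<in> V" "\<And>x. x \<in> V \<Longrightarrow> f x \<le> f x0" and gt: "K / \<alpha> < f x0"
    using exists_max_on[of f] by (metis empty_iff order.strict_trans2 not_le)
  have "0 \<le> K / \<alpha>" using assms(1) alpha_pos by simp
  then have "f x0 \<le> K + (1 - \<alpha>) * f x0"
    using sub[OF x0(1)] walk_op_le_max[where f = f and E = E, OF x0] gt by simp
  then show False using gt alpha_pos by (simp add: field_simps)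
qed

lemma walk_op_fixpoint_eq_0:
  assumes "\<And>x. x \<in> V \<Longrightarrow> f x = walk_op \<alpha> V E f x"
  shows "\<forall>x\<in>V. f x = 0"
proof -
  have "\<forall>x\<in>V. f x \<le> 0" using assms by (intro max_principle) auto
  moreover have "\<forall>x\<in>V. - f x \<le> 0" using assms by (intro max_principle) (auto simp: walk_op_uminus)
  ultimately show ?thesis by force
qed

lemma eq_on_if_same_source:
  assumes "\<And>x. x \<in> V \<Longrightarrow> f x - walk_op \<alpha> V E f x = g x - walk_op \<alpha> V E g x"
  shows "\<forall>x\<in>V. f x = g x"
proof -
  have "\<forall>x\<in>V. f x - g x = 0"
    using assms by (intro walk_op_fixpoint_eq_0) (simp add: walk_op_diff algebra_simps)
  then show ?thesis by simp
qed

lemma green_equation_unique: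
  "green_equation \<alpha> V E w g \<Longrightarrow> green_equation \<alpha> V E w h \<Longrightarrow> \<forall>x\<in>V. g x = h x"
  by (rule eq_on_if_same_source[where E = E]) (simp add: green_equation_def)

lemma green_equation_nonneg:
  assumes "green_equation \<alpha> V E w g"
  shows "\<forall>x\<in>V. 0 \<le> g x"
proof -
  have "\<forall>x\<in>V. - g x \<le> 0"
    using assms by (intro max_principle) (auto simp: green_equation_def walk_op_uminus)
  then show ?thesis by simp
qed

lemma first_hit_weight_bounds:
  assumes "w \<in> V"
  shows "\<forall>x\<in>V. 0 \<le> first_hit_weight \<alpha> V E x w k \<and> first_hit_weight \<alpha> V E x w k \<le> (1 - \<alpha>) ^ k"
proof (induction k)
  case 0
  then show ?case using assms by (simp add: first_hit_weight_0)
next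
  case (Suc k)
  show ?case
  proof
    fix x assume x: "x \<in> V"
    let ?h = "\<lambda>y. first_hit_weight \<alpha> V E y w k"
    have "\<And>y. y \<in> nbrs V E x \<Longrightarrow> 0 \<le> ?h y \<and> ?h y \<le> (1 - \<alpha>) ^ k"
      using Suc by (auto dest: nbrs_memD)
    then have "0 \<le> walk_op \<alpha> V E ?h x" "walk_op \<alpha> V E ?h x \<le> (1 - \<alpha>) * (1 - \<alpha>) ^ k"
      using alpha_less_1 by (auto intro!: walk_op_nonneg walk_op_le)
    then show "0 \<le> first_hit_weight \<alpha> V E x w (Suc k) \<and> first_hit_weight \<alpha> V E x w (Suc k) \<le> (1 - \<alpha>) ^ Suc k"
      using alpha_less_1 by (simp add: first_hit_weight_Suc[OF finite_V x])
  qed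
qed

lemma summable_first_hit_weight:
  assumes "w \<in> V" "x \<in> V"
  shows "summable (first_hit_weight \<alpha> V E x w)"
proof (rule summable_comparison_test')
  show "summable (\<lambda>k. (1 - \<alpha>) ^ k)" using alpha_pos alpha_less_1 by (intro summable_geometric) auto
  show "norm (first_hit_weight \<alpha> V E x w k) \<le> (1 - \<alpha>) ^ k" for k
    using first_hit_weight_bounds[OF assms(1)] assms(2) by auto
qed

lemma phi_recursion:
  assumes "w \<in> V" "x \<in> V"
  shows "phi \<alpha> V E x w = (if x = w then 1 else walk_op \<alpha> V E (\<lambda>y. phi \<alpha> V E y w) x)"
proof -
  let ?a = "\<lambda>y. first_hit_weight \<alpha> V E y w"
  have summable: "\<And>y. y \<in> V \<Longrightarrow> summable (?a y)"
    using summable_first_hit_weight[OF assms(1)] by blast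
  have "phi \<alpha> V E x w = (\<Sum>k. ?a x (Suc k)) + ?a x 0"
    unfolding phi_eq_suminf using suminf_split_head[OF summable[OF assms(2)]] by simp
  also have "(\<Sum>k. ?a x (Suc k)) = (if x = w then 0 else \<Sum>k. walk_op \<alpha> V E (\<lambda>y. ?a y k) x)"
    by (simp add: first_hit_weight_Suc[OF finite_V assms(2)])
  also have "(\<Sum>k. walk_op \<alpha> V E (\<lambda>y. ?a y k) x) = walk_op \<alpha> V E (\<lambda>y. phi \<alpha> V E y w) x"
  proof -
    have "\<And>y. y \<in> nbrs V E x \<Longrightarrow> summable (?a y)"
      using summable by (auto dest: nbrs_memD)
    then have "(\<lambda>k. walk_op \<alpha> V E (\<lambda>y. ?a y k) x) sums walk_op \<alpha> V E (\<lambda>y. phi \<alpha> V E y w) x"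
      unfolding walk_op_def phi_eq_suminf by (intro sums_mult sums_sum summable_sums)
    then show ?thesis by (rule sums_unique[symmetric])
  qed
  finally show ?thesis using first_hit_weight_0[OF assms(1)] by simp
qed

lemma phi_le_1:
  assumes "w \<in> V"
  shows "\<forall>x\<in>V. phi \<alpha> V E x w \<le> 1"
  using phi_recursion[OF assms] by (intro max_principle) auto

text \<open>Renewal at \<open>w\<close>: \<open>R\<close> is the probability of returning to \<open>w\<close> before the first jump, so the
  number of visits to \<open>w\<close>, counted from the first one, is geometric with mean \<open>1/(1 - R)\<close>.\<close>
lemma green_equation_phi:
  fixes E :: "'a set set"
  assumes "w \<in> V"
  defines "R \<equiv> walk_op \<alpha> V E (\<lambda>y. phi \<alpha> V E y w) w"
  shows "R < 1" and "green_equation \<alpha> V E w (\<lambda>x. phi \<alpha> V E x w / (1 - R))"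
proof -
  have "R \<le> (1 - \<alpha>) * 1"
    unfolding R_def using phi_le_1[OF assms(1)] alpha_less_1
    by (intro walk_op_le) (auto dest: nbrs_memD)
  then show R: "R < 1" using alpha_pos by simp
  show "green_equation \<alpha> V E w (\<lambda>x. phi \<alpha> V E x w / (1 - R))"
    unfolding green_equation_def
  proof
    fix x assume x: "x \<in> V"
    have "walk_op \<alpha> V E (\<lambda>y. phi \<alpha> V E y w / (1 - R)) x = walk_op \<alpha> V E (\<lambda>y. phi \<alpha> V E y w) x / (1 - R)"
      using walk_op_cmult[of \<alpha> V E "1 / (1 - R)" "\<lambda>y. phi \<alpha> V E y w" x] by simp
    then show "phi \<alpha> V E x w / (1 - R)
        = (if x = w then 1 else 0) + walk_op \<alpha> V E (\<lambda>y. phi \<alpha> V E y w / (1 - R)) x"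
      using phi_recursion[OF assms(1) x] R by (auto simp: R_def field_simps)
  qed
qed

lemma green_equation_green:
  assumes "w \<in> V"
  shows "green_equation \<alpha> V E w (green \<alpha> V E w)"
  unfolding green_def by (rule someI[where P = "green_equation \<alpha> V E w", OF green_equation_phi(2)[OF assms]])

lemma green_eq:
  "w \<in> V \<Longrightarrow> x \<in> V \<Longrightarrow> green \<alpha> V E w x = (if x = w then 1 else 0) + walk_op \<alpha> V E (green \<alpha> V E w) x"
  using green_equation_green by (simp add: green_equation_def)

lemma green_nonneg: "w \<in> V \<Longrightarrow> x \<in> V \<Longrightarrow> 0 \<le> green \<alpha> V E w x"
  using green_equation_nonneg[OF green_equation_green] by blast

lemma green_self_ge_1:
  assumes "w \<in> V"
  shows "1 \<le> green \<alpha> V E w w"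
proof -
  have "0 \<le> walk_op \<alpha> V E (green \<alpha> V E w) w"
    using assms alpha_less_1 green_nonneg by (intro walk_op_nonneg) (auto dest: nbrs_memD)
  then show ?thesis using green_eq[OF assms assms] by simp
qed

lemma green_eq_phi:
  assumes "w \<in> V" "x \<in> V"
  shows "green \<alpha> V E w x = phi \<alpha> V E x w / (1 - walk_op \<alpha> V E (\<lambda>y. phi \<alpha> V E y w) w)"
  using green_equation_unique[OF green_equation_green green_equation_phi(2)] assms by blast

lemma pagerank_eq_green:
  assumes "w \<in> V"
  shows "pagerank \<alpha> q V E w = \<alpha> * (\<Sum>x\<in>V. q x * green \<alpha> V E w x)"
  by (simp add: pagerank_def green_eq_phi[OF assms] walk_op_def sum_divide_distrib[symmetric])

lemma green_automorphism:
  assumes "graph_automorphism V E \<sigma>" "w \<in> V" "x \<in> V"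
  shows "green \<alpha> V E (\<sigma> w) (\<sigma> x) = green \<alpha> V E w x"
proof -
  have "\<sigma> w \<in> V"
    using assms(1,2) by (auto simp: graph_automorphism_def bij_betw_def)
  then have "green_equation \<alpha> V E w (\<lambda>x. green \<alpha> V E (\<sigma> w) (\<sigma> x))"
    by (intro green_equation_automorphism[OF assms(1,2)] green_equation_green)
  then show ?thesis
    using green_equation_unique[OF _ green_equation_green[OF assms(2)]] assms(3) by blast
qed

lemma sum_green_automorphism:
  assumes "graph_automorphism V E \<sigma>" "w \<in> V"
  shows "(\<Sum>x\<in>V. green \<alpha> V E (\<sigma> w) x) = (\<Sum>x\<in>V. green \<alpha> V E w x)"
proof -
  have "bij_betw \<sigma> V V" using assms(1) by (simp add: graph_automorphism_def)
  then have "(\<Sum>x\<in>V. green \<alpha> V E (\<sigma> w) x) = (\<Sum>x\<in>V. green \<alpha> V E (\<sigma> w) (\<sigma> x))"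
    by (simp add: sum.reindex_bij_betw)
  also have "\<dots> = (\<Sum>x\<in>V. green \<alpha> V E w x)"
    using green_automorphism[OF assms] by simp
  finally show ?thesis .
qed

lemma sum_green_over_poles_le:
  assumes "x \<in> V"
  shows "(\<Sum>w\<in>V. green \<alpha> V E w x) \<le> 1 / \<alpha>"
proof -
  let ?s = "\<lambda>x. \<Sum>w\<in>V. green \<alpha> V E w x"
  have "?s x = 1 + walk_op \<alpha> V E ?s x" if "x \<in> V" for x
  proof -
    have "?s x = (\<Sum>w\<in>V. (if x = w then 1 else 0) + walk_op \<alpha> V E (green \<alpha> V E w) x)"
      using green_eq that by (intro sum.cong) auto
    also have "\<dots> = 1 + walk_op \<alpha> V E ?s x"
      using that finite_V by (simp add: sum.distrib walk_op_sum)
    finally show ?thesis .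
  qed
  then show ?thesis using max_principle_source[of 1 ?s E] assms by simp
qed

lemma sum_green_ge_1:
  assumes "w \<in> V"
  shows "1 \<le> (\<Sum>x\<in>V. green \<alpha> V E w x)"
proof -
  have "green \<alpha> V E w w \<le> (\<Sum>x\<in>V. green \<alpha> V E w x)"
    using assms green_nonneg[OF assms] finite_V by (intro member_le_sum) auto
  then show ?thesis using green_self_ge_1[OF assms, where E = E] by simp
qed

lemma green_pos_nbr:
  assumes "x \<in> V" "y \<in> nbrs V E x" "y \<noteq> x"
  shows "0 < green \<alpha> V E y x"
proof -
  have y: "y \<in> V" using assms(2) by (rule nbrs_memD)
  have "0 < card (nbrs V E x)"
    using assms(2) finite_nbrs[OF finite_V] card_gt_0_iff by blast
  then have "0 < (1 - \<alpha>) / real (card (nbrs V E x)) * green \<alpha> V E y y"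
    using alpha_less_1 green_self_ge_1[OF y, where E = E] by (intro mult_pos_pos divide_pos_pos) auto
  also have "\<dots> \<le> walk_op \<alpha> V E (green \<alpha> V E y) x"
    using assms(2) y alpha_less_1 green_nonneg by (intro walk_op_ge_nbr finite_V) (auto dest: nbrs_memD)
  also have "\<dots> = green \<alpha> V E y x"
    using green_eq[OF y assms(1)] assms(3) by simp
  finally show ?thesis .
qed

lemma green_insert_edge:
  assumes "u \<in> V" "v \<in> V" "u \<noteq> v" "{u, v} \<notin> E" "w \<in> V" "x \<in> V"
  defines "E' \<equiv> insert {u, v} E" and "g \<equiv> green \<alpha> V E w"
  shows "g x = green \<alpha> V E' w x - edge_increment \<alpha> V E g u v * green \<alpha> V E' u x
                 - edge_increment \<alpha> V E g v u * green \<alpha> V E' v x"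
proof -
  define ru where "ru = edge_increment \<alpha> V E g u v"
  define rv where "rv = edge_increment \<alpha> V E g v u"
  let ?h = "\<lambda>x. green \<alpha> V E' w x - ru * green \<alpha> V E' u x - rv * green \<alpha> V E' v x"
  have "g x - walk_op \<alpha> V E' g x = ?h x - walk_op \<alpha> V E' ?h x" if "x \<in> V" for x
  proof -
    have "g x - walk_op \<alpha> V E' g x
        = (if x = w then 1 else 0) - (if x = u then ru else 0) - (if x = v then rv else 0)"
      using green_eq[OF assms(5) that] walk_op_insert_edge[OF finite_V assms(1-4)]
      by (simp add: E'_def g_def ru_def rv_def)
    also have "\<dots> = ?h x - walk_op \<alpha> V E' ?h x"
      unfolding walk_op_diff walk_op_cmult
      using green_eq[where E = E', OF assms(1) that] green_eq[where E = E', OF assms(2) that]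
        green_eq[where E = E', OF assms(5) that] assms(3)
      by (simp add: algebra_simps)
    finally show ?thesis .
  qed
  then have "\<forall>x\<in>V. g x = ?h x"
    by (rule eq_on_if_same_source)
  then show ?thesis using assms(6) by (simp add: ru_def rv_def)
qed

lemma green_two_poles_lt:
  assumes "u \<in> V" "v \<in> V" "u \<noteq> v" "y \<in> nbrs V E v" "y \<noteq> u" "y \<noteq> v"
  shows "green \<alpha> V E u v + green \<alpha> V E v v < 1 / \<alpha>"
proof -
  have y: "y \<in> V" using assms(4) by (rule nbrs_memD)
  have "green \<alpha> V E u v + green \<alpha> V E v v + green \<alpha> V E y v = (\<Sum>w\<in>{u, v, y}. green \<alpha> V E w v)"
    using assms(3,5,6) by simp
  also have "\<dots> \<le> (\<Sum>w\<in>V. green \<alpha> V E w v)"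
    using assms(1,2) y green_nonneg[OF _ assms(2)] finite_V by (intro sum_mono2) auto
  also have "\<dots> \<le> 1 / \<alpha>"
    using sum_green_over_poles_le[OF assms(2)] .
  finally show ?thesis
    using green_pos_nbr[OF assms(2,4,6)] by simp
qed

lemma edge_increment_green_sum:
  assumes "u \<in> V" "v \<in> V" "u \<noteq> v" "card (nbrs V E u) = card (nbrs V E v)"
  defines "g \<equiv> green \<alpha> V E v"
  shows "edge_increment \<alpha> V E g u v + edge_increment \<alpha> V E g v u
    = (1 - \<alpha> * (g u + g v)) / (real (card (nbrs V E v)) + 1)"
proof -
  have "walk_op \<alpha> V E g u = g u" "walk_op \<alpha> V E g v = g v - 1"
    using green_eq[OF assms(2,1)] green_eq[OF assms(2,2)] assms(3) by (simp_all add: g_def)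
  then show ?thesis
    using assms(4) by (simp add: edge_increment_def add_divide_distrib[symmetric] algebra_simps)
qed

lemma sum_green_insert_symmetric_edge:
  assumes "u \<in> V" "v \<in> V" "u \<noteq> v" "{u, v} \<notin> E" "v \<notin> nbrs V E v" "nbrs V E v \<noteq> {}"
    and aut: "graph_automorphism V E \<sigma>" "\<sigma> u = v" "\<sigma> v = u"
  shows "(\<Sum>x\<in>V. green \<alpha> V E v x) < (\<Sum>x\<in>V. green \<alpha> V (insert {u, v} E) v x)"
proof -
  define E' where "E' = insert {u, v} E"
  define g where "g = green \<alpha> V E v"
  define ru where "ru = edge_increment \<alpha> V E g u v"
  define rv where "rv = edge_increment \<alpha> V E g v u"
  define r where "r = ru + rv"
  have sym: "(\<Sum>x\<in>V. green \<alpha> V E' u x) = (\<Sum>x\<in>V. green \<alpha> V E' v x)"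
    using sum_green_automorphism[OF graph_automorphism_insert_edge[OF aut(1) assms(1,2) aut(2,3)] assms(2)]
    by (simp add: aut(3) E'_def)
  have "(\<Sum>x\<in>V. g x) = (\<Sum>x\<in>V. green \<alpha> V E' v x - ru * green \<alpha> V E' u x - rv * green \<alpha> V E' v x)"
    using green_insert_edge[OF assms(1-4,2)] by (intro sum.cong) (simp_all add: E'_def g_def ru_def rv_def)
  also have "\<dots> = (\<Sum>x\<in>V. green \<alpha> V E' v x) - ru * (\<Sum>x\<in>V. green \<alpha> V E' u x) - rv * (\<Sum>x\<in>V. green \<alpha> V E' v x)"
    by (simp add: sum_subtractf sum_distrib_left)
  finally have sum_g: "(\<Sum>x\<in>V. g x) = (1 - r) * (\<Sum>x\<in>V. green \<alpha> V E' v x)"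
    unfolding sym by (simp add: r_def algebra_simps)
  have "g u = green \<alpha> V E u v"
    using green_automorphism[OF aut(1) assms(1,2)] aut(2,3) by (simp add: g_def)
  moreover obtain y where y: "y \<in> nbrs V E v" using assms(6) by blast
  moreover have "y \<noteq> u" "y \<noteq> v"
    using y assms(4,5) by (auto simp: nbrs_def insert_commute)
  ultimately have "\<alpha> * (g u + g v) < 1"
    using green_two_poles_lt[OF assms(1-3) y] alpha_pos by (simp add: g_def field_simps)
  moreover have "card (nbrs V E u) = card (nbrs V E v)"
    using card_nbrs_automorphism[OF aut(1) assms(2)] aut(3) by simp
  ultimately have "0 < r"
    unfolding r_def ru_def rv_def g_def using edge_increment_green_sum[OF assms(1-3)] by simp
  then have "0 < r * (\<Sum>x\<in>V. green \<alpha> V E' v x)"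
    using sum_green_ge_1[OF assms(2), where E = E'] by simp
  then show ?thesis
    using sum_g by (simp add: E'_def g_def algebra_simps)
qed

lemma pagerank_uniform_eq_green:
  "w \<in> V \<Longrightarrow> pagerank \<alpha> (\<lambda>x. 1 / real (card V)) V E w = \<alpha> * (\<Sum>x\<in>V. green \<alpha> V E w x) / real (card V)"
  by (simp add: pagerank_eq_green sum_divide_distrib[symmetric])

lemma pagerank_insert_symmetric_edge_gt:
  assumes "u \<in> V" "v \<in> V" "u \<noteq> v" "{u, v} \<notin> E" "v \<notin> nbrs V E v" "nbrs V E v \<noteq> {}"
    and "graph_automorphism V E \<sigma>" "\<sigma> u = v" "\<sigma> v = u"
  shows "pagerank \<alpha> (\<lambda>w. 1 / real (card V)) V E v < pagerank \<alpha> (\<lambda>w. 1 / real (card V)) V (insert {u, v} E) v"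
proof -
  have "0 < card V"
    using assms(2) finite_V card_gt_0_iff by blast
  then show ?thesis
    unfolding pagerank_uniform_eq_green[OF assms(2)]
    using sum_green_insert_symmetric_edge[OF assms] alpha_pos
    by (intro divide_strict_right_mono mult_strict_left_mono) auto
qed

end

theorem theorem5p4:
  fixes V :: "'a set" and E :: "'a set set" and \<alpha> :: real and u v :: 'a and \<sigma> :: "'a \<Rightarrow> 'a"
  assumes "simple_graph V E"
    and "0 < \<alpha>" and "\<alpha> < 1"
    and "u \<in> V" and "v \<in> V" and "u \<noteq> v" and "{u, v} \<notin> E"
    and "nbrs V E v \<noteq> {}"
    and "graph_automorphism V E \<sigma>" and "\<sigma> v = u" and "\<sigma> u = v"
  shows "pagerank \<alpha> (\<lambda>w. 1 / real (card V)) V (insert {u, v} E) v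
           > pagerank \<alpha> (\<lambda>w. 1 / real (card V)) V E v
       \<and> pagerank \<alpha> (\<lambda>w. 1 / real (card V)) V (insert {u, v} E) u
           > pagerank \<alpha> (\<lambda>w. 1 / real (card V)) V E u"
proof -
  interpret damped_walk V \<alpha>
    using assms(1-3) by unfold_locales (simp_all add: simple_graph_def)
  have no_loop: "\<And>x. x \<notin> nbrs V E x"
    using assms(1) by (rule simple_graph_no_loop)
  have "{v, u} \<notin> E" using assms(7) by (simp add: insert_commute)
  moreover have "nbrs V E u \<noteq> {}"
    using nbrs_automorphism[OF assms(9,5)] assms(8,10) by simp
  ultimately show ?thesis
    using pagerank_insert_symmetric_edge_gt[OF assms(4-7) no_loop assms(8,9,11,10)]
      pagerank_insert_symmetric_edge_gt[OF assms(5,4) assms(6)[symmetric] _ no_loop _ assms(9,10,11)]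
    by (simp add: insert_commute)
qed

end
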